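(* Let $0<q<1$, let $n$ be a nonnegative integer, let $k$ be an integer with $0\le k\le n$, and let $x\in[0,1]$. Then $$B_{n-k,n}(1-x,q)=B_{k,n}(x,q),$$ and $$\sum_{k=0}^n B_{k,n}(x,q)=\bigl(1+[x]_q[1-x]_q(1-q)\bigr)^n=B_{n,q}(1:x),$$ where $B_{n,q}(1:x)$ denotes the modified $q$-Bernstein operator applied to the constant function $1$.
   Context: Let $q$ be a real number with $0<q<1$. For real $x$, the $q$-number is $[x]_q=\frac{1-q^x}{1-q}$. For a nonnegative integer $k$ and $x\in[0,1]$, the modified $q$-Bernstein polynomials $B_{k,n}(x,q)$, $n=0,1,2,\dots$, are defined by the generating function $$\frac{t^k e^{[1-x]_q t}[x]_q^k}{k!}=\sum_{n=0}^\infty B_{k,n}(x,q)\frac{t^n}{n!}.$$ For $f$ continuous on $[0,1]$, the modified $q$-Bernstein operator is $B_{n,q}(f:x)=\sum_{j=0}^n f\left(\frac{j}{n}\right)B_{j,n}(x,q)$ for $x\in[0,1]$. *)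

theory Defs
  imports Complex_Main "HOL-Computational_Algebra.Formal_Power_Series"
begin

definition qnum :: "real \<Rightarrow> real \<Rightarrow> real" where
  "qnum q x = (1 - q powr x) / (1 - q)"

definition qBern_gf :: "nat \<Rightarrow> real \<Rightarrow> real \<Rightarrow> real fps" where
  "qBern_gf k x q = fps_const (qnum q x ^ k / fact k) * fps_X ^ k * fps_exp (qnum q (1 - x))"

definition qBern :: "nat \<Rightarrow> nat \<Rightarrow> real \<Rightarrow> real \<Rightarrow> real" where
  "qBern k n x q = fact n * fps_nth (qBern_gf k x q) n"

definition qBern_op :: "nat \<Rightarrow> real \<Rightarrow> (real \<Rightarrow> real) \<Rightarrow> real \<Rightarrow> real" where
  "qBern_op n q f x = (\<Sum>j=0..n. f (real j / real n) * qBern j n x q)"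

end

theory Submission
  imports Defs
begin

text \<open>Reading off the n-th coefficient of the generating function gives the closed form
  B_{k,n}(x,q) = (n choose k) [x]_q^k [1-x]_q^(n-k); the symmetry is then the symmetry of the
  binomial coefficients, and the sum is the binomial expansion of ([x]_q + [1-x]_q)^n, which
  equals 1 + [x]_q [1-x]_q (1 - q) because q^x q^(1-x) = q.\<close>

lemma qBern_eq:
  assumes "k \<le> n"
  shows "qBern k n x q = real (n choose k) * qnum q x ^ k * qnum q (1 - x) ^ (n - k)"
proof -
  have "qBern k n x q = fact n * (qnum q x ^ k / fact k) * (qnum q (1 - x) ^ (n - k) / fact (n - k))"
    unfolding qBern_def qBern_gf_def
    using assms by (simp add: mult.assoc fps_X_power_mult_nth fps_exp_def not_less)
  also have "\<dots> = real (n choose k) * qnum q x ^ k * qnum q (1 - x) ^ (n - k)"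
    using assms by (simp add: binomial_fact field_simps)
  finally show ?thesis .
qed

lemma qnum_add_qnum_compl:
  assumes "0 < q" "q \<noteq> 1"
  shows "qnum q x + qnum q (1 - x) = 1 + qnum q x * qnum q (1 - x) * (1 - q)"
proof -
  define a b where "a = q powr x" and "b = q powr (1 - x)"
  have "a * b = q"
    using assms(1) by (simp add: a_def b_def flip: powr_add)
  have "1 - q \<noteq> 0"
    using assms(2) by simp
  have "(1 - a) / (1 - q) + (1 - b) / (1 - q)
      = 1 + (1 - a) / (1 - q) * ((1 - b) / (1 - q)) * (1 - q)"
  proof -
    have "(1 - a) / (1 - q) + (1 - b) / (1 - q) = ((1 - q) + (1 - a) * (1 - b)) / (1 - q)"
      using \<open>a * b = q\<close> by (simp add: add_divide_distrib[symmetric] algebra_simps)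
    also have "\<dots> = 1 + (1 - a) * (1 - b) / (1 - q)"
      using \<open>1 - q \<noteq> 0\<close> by (simp add: add_divide_distrib)
    also have "\<dots> = 1 + (1 - a) / (1 - q) * ((1 - b) / (1 - q)) * (1 - q)"
      using \<open>1 - q \<noteq> 0\<close> by simp
    finally show ?thesis .
  qed
  then show ?thesis
    by (simp add: qnum_def a_def b_def)
qed

lemma qBern_compl:
  assumes "k \<le> n"
  shows "qBern (n - k) n (1 - x) q = qBern k n x q"
  using assms by (simp add: qBern_eq binomial_symmetric[symmetric] mult_ac)

lemma sum_qBern:
  assumes "0 < q" "q \<noteq> 1"
  shows "(\<Sum>j=0..n. qBern j n x q) = (1 + qnum q x * qnum q (1 - x) * (1 - q)) ^ n"
  unfolding qnum_add_qnum_compl[OF assms, symmetric] binomial_ring atLeast0AtMost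
  by (intro sum.cong) (auto simp: qBern_eq)

lemma qBern_op_const_1: "qBern_op n q (\<lambda>_. 1) x = (\<Sum>j=0..n. qBern j n x q)"
  unfolding qBern_op_def by simp

theorem theorem3:
  fixes q x :: real and n k :: nat
  assumes "0 < q" "q < 1" "k \<le> n" "0 \<le> x" "x \<le> 1"
  shows "qBern (n - k) n (1 - x) q = qBern k n x q
    \<and> (\<Sum>j=0..n. qBern j n x q) = (1 + qnum q x * qnum q (1 - x) * (1 - q)) ^ n
    \<and> (1 + qnum q x * qnum q (1 - x) * (1 - q)) ^ n = qBern_op n q (\<lambda>_. 1) x"
proof -
  have "q \<noteq> 1"
    using assms(2) by simp
  then show ?thesis
    using assms(1,3) qBern_compl sum_qBern qBern_op_const_1 by simp
qed

end
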